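(* Let $0<\bar C\le1$, $\epsilon>0$, $\omega\ge0$, $\gamma_0\ge\gamma\ge0$. Let $\omega(t),\epsilon_x(t),\epsilon_y(t),\delta\gamma_t$ be real-valued functions of time with $|\omega(t)|\le\omega$, $\sqrt{\epsilon_x^2(t)+\epsilon_y^2(t)}\le\epsilon$, $|\delta\gamma_t|\le\gamma$, and set $H(t)=[1+\omega(t)]I_z+\epsilon_x(t)I_x+\epsilon_y(t)I_y$, $\gamma_t=\gamma_0+\delta\gamma_t$. Let the qubit density matrix $\rho_t$ evolve according to $$\dot\rho_t=-i[H(t),\rho_t]+\gamma_t(\sigma_z\rho_t\sigma_z-\rho_t)$$ from an initial state $\rho_0$ with $C_0=[\mathrm{tr}(\rho_0\sigma_x)]^2+[\mathrm{tr}(\rho_0\sigma_y)]^2=1$. Define $$T_p=\begin{cases}\dfrac{1-\bar C}{4\sqrt2(\gamma_0+\gamma)}, & \text{if } 4(\gamma_0+\gamma)^2\ge\epsilon^2,\\[2mm] \dfrac{(1-\bar C)\sqrt{\epsilon^2-2(\gamma_0+\gamma)^2}}{2\epsilon^2}, & \text{if } 4(\gamma_0+\gamma)^2<\epsilon^2.\end{cases}$$ Then for every $t\in[0,T_p]$, $\rho_t\in\mathcal{D}_p=\{\rho:[\mathrm{tr}(\rho\sigma_x)]^2+[\mathrm{tr}(\rho\sigma_y)]^2\ge\bar C\}$. Consequently, if projective measurements of $\sigma_x$ are performed periodically with period $T_p$, the state remains in $\mathcal{D}_p$.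
   Context: $\sigma_x,\sigma_y,\sigma_z$ are the Pauli matrices $\begin{pmatrix}0&1\\1&0\end{pmatrix},\begin{pmatrix}0&-i\\i&0\end{pmatrix},\begin{pmatrix}1&0\\0&-1\end{pmatrix}$, $I_j=\frac12\sigma_j$, $[A,B]=AB-BA$, units with $\hbar=1$. The coherence of a qubit state $\rho$ is $C=x^2+y^2$ with $x=\mathrm{tr}(\rho\sigma_x)$, $y=\mathrm{tr}(\rho\sigma_y)$. *)

theory Defs
  imports "HOL-Analysis.Analysis"
begin

type_synonym cmat2 = "complex^2^2"

definition mat2 :: "complex \<Rightarrow> complex \<Rightarrow> complex \<Rightarrow> complex \<Rightarrow> cmat2" where
  "mat2 a b c d = (\<chi> i j. if i = 1 then (if j = 1 then a else b) else (if j = 1 then c else d))"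

definition sigma_x :: cmat2 where "sigma_x = mat2 0 1 1 0"
definition sigma_y :: cmat2 where "sigma_y = mat2 0 (- \<i>) \<i> 0"
definition sigma_z :: cmat2 where "sigma_z = mat2 1 0 0 (-1)"

definition I_x :: cmat2 where "I_x = (1/2) *\<^sub>R sigma_x"
definition I_y :: cmat2 where "I_y = (1/2) *\<^sub>R sigma_y"
definition I_z :: cmat2 where "I_z = (1/2) *\<^sub>R sigma_z"

definition cscale :: "complex \<Rightarrow> cmat2 \<Rightarrow> cmat2" where
  "cscale c A = (\<chi> i j. c * A $ i $ j)"

definition commutator :: "cmat2 \<Rightarrow> cmat2 \<Rightarrow> cmat2" where
  "commutator A B = A ** B - B ** A"

definition adjoint2 :: "cmat2 \<Rightarrow> cmat2" where
  "adjoint2 A = (\<chi> i j. cnj (A $ j $ i))"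

definition density :: "cmat2 \<Rightarrow> bool" where
  "density \<rho> \<longleftrightarrow> adjoint2 \<rho> = \<rho>
     \<and> (\<forall>v :: complex^2. 0 \<le> Re (\<Sum>i\<in>UNIV. \<Sum>j\<in>UNIV. cnj (v $ i) * \<rho> $ i $ j * v $ j))
     \<and> trace \<rho> = 1"

definition bloch_x :: "cmat2 \<Rightarrow> real" where "bloch_x \<rho> = Re (trace (\<rho> ** sigma_x))"
definition bloch_y :: "cmat2 \<Rightarrow> real" where "bloch_y \<rho> = Re (trace (\<rho> ** sigma_y))"

definition coherence :: "cmat2 \<Rightarrow> real" where
  "coherence \<rho> = (bloch_x \<rho>)\<^sup>2 + (bloch_y \<rho>)\<^sup>2"

definition D_p :: "real \<Rightarrow> cmat2 set" where
  "D_p Cbar = {\<rho>. coherence \<rho> \<ge> Cbar}"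

definition T_p :: "real \<Rightarrow> real \<Rightarrow> real \<Rightarrow> real \<Rightarrow> real" where
  "T_p Cbar eps g0 g =
     (if 4 * (g0 + g)\<^sup>2 \<ge> eps\<^sup>2 then (1 - Cbar) / (4 * sqrt 2 * (g0 + g))
      else (1 - Cbar) * sqrt (eps\<^sup>2 - 2 * (g0 + g)\<^sup>2) / (2 * eps\<^sup>2))"

definition Ham :: "real \<Rightarrow> real \<Rightarrow> real \<Rightarrow> cmat2" where
  "Ham w ex ey = (1 + w) *\<^sub>R I_z + ex *\<^sub>R I_x + ey *\<^sub>R I_y"

end

theory Submission
  imports Defs
begin

text \<open>In Bloch coordinates \<open>(x, y, z)\<close> the master equation is linear: the Hamiltonian rotates the
Bloch vector and dephasing damps \<open>x, y\<close> at rate \<open>2\<gamma>\<^sub>t\<close>. Hence \<open>x\<^sup>2 + y\<^sup>2 + z\<^sup>2\<close> never increases, so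
\<open>z\<^sup>2 \<le> 1 - C\<close>, while \<open>dC/dt = 2 z (\<epsilon>\<^sub>y x - \<epsilon>\<^sub>x y) - 4 \<gamma>\<^sub>t C\<close>. Maximising the quadratic form in \<open>(\<bar>z\<bar>, \<surd>C)\<close>
over the unit disc gives \<open>dC/dt \<ge> -M\<close> with \<open>M = 2 G + \<surd>(\<epsilon>\<^sup>2 + 4 G\<^sup>2)\<close>, \<open>G = \<gamma>\<^sub>0 + \<gamma>\<close>, so
\<open>C(t) \<ge> 1 - M t\<close>; finally \<open>M T\<^sub>p \<le> 1 - Cbar\<close> in both regimes of the definition of \<open>T\<^sub>p\<close>.\<close>

definition bloch_z :: "cmat2 \<Rightarrow> real" where "bloch_z \<rho> = Re (trace (\<rho> ** sigma_z))"

definition lindblad :: "real \<Rightarrow> real \<Rightarrow> real \<Rightarrow> real \<Rightarrow> cmat2 \<Rightarrow> cmat2" where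
  "lindblad w ex ey g \<rho> =
     cscale (- \<i>) (commutator (Ham w ex ey) \<rho>) + g *\<^sub>R (sigma_z ** \<rho> ** sigma_z - \<rho>)"

lemma bloch_entries:
  "bloch_x A = Re (A$1$2) + Re (A$2$1)"
  "bloch_y A = Im (A$2$1) - Im (A$1$2)"
  "bloch_z A = Re (A$1$1) - Re (A$2$2)"
  unfolding bloch_x_def bloch_y_def bloch_z_def trace_def sigma_x_def sigma_y_def sigma_z_def mat2_def
  by (simp_all add: matrix_matrix_mult_def sum_2)

lemma bounded_linear_bloch: "bounded_linear bloch_x" "bounded_linear bloch_y" "bounded_linear bloch_z"
proof -
  have entry: "bounded_linear (\<lambda>A::cmat2. Re (A $ i $ j))" "bounded_linear (\<lambda>A::cmat2. Im (A $ i $ j))" for i j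
    by (intro bounded_linear_compose[OF bounded_linear_Re] bounded_linear_compose[OF bounded_linear_Im]
        bounded_linear_vec_nth bounded_linear_compose[OF bounded_linear_vec_nth])+
  show "bounded_linear bloch_x" "bounded_linear bloch_y" "bounded_linear bloch_z"
    unfolding bloch_entries[abs_def] by (intro bounded_linear_add bounded_linear_sub entry)+
qed

lemma bloch_has_real_derivative:
  assumes "(\<rho> has_vector_derivative D) F"
  shows "((\<lambda>t. bloch_x (\<rho> t)) has_real_derivative bloch_x D) F"
    and "((\<lambda>t. bloch_y (\<rho> t)) has_real_derivative bloch_y D) F"
    and "((\<lambda>t. bloch_z (\<rho> t)) has_real_derivative bloch_z D) F"
  unfolding has_real_derivative_iff_has_vector_derivative
  by (rule bounded_linear.has_vector_derivative[OF bounded_linear_bloch(1) assms]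
      bounded_linear.has_vector_derivative[OF bounded_linear_bloch(2) assms]
      bounded_linear.has_vector_derivative[OF bounded_linear_bloch(3) assms])+

lemma bloch_lindblad:
  "bloch_x (lindblad w ex ey g A) = - (1 + w) * bloch_y A + ey * bloch_z A - 2 * g * bloch_x A"
  "bloch_y (lindblad w ex ey g A) = (1 + w) * bloch_x A - ex * bloch_z A - 2 * g * bloch_y A"
  "bloch_z (lindblad w ex ey g A) = ex * bloch_y A - ey * bloch_x A"
  unfolding bloch_entries lindblad_def cscale_def commutator_def Ham_def I_x_def I_y_def I_z_def
    sigma_x_def sigma_y_def sigma_z_def mat2_def
  by (simp_all add: matrix_matrix_mult_def sum_2 field_simps)

lemma bloch_ball:
  assumes "density A"
  shows "coherence A + (bloch_z A)\<^sup>2 \<le> 1"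
proof -
  have herm: "adjoint2 A = A"
    and psd: "\<And>v :: complex^2. 0 \<le> Re (\<Sum>i\<in>UNIV. \<Sum>j\<in>UNIV. cnj (v $ i) * A $ i $ j * v $ j)"
    and tr: "trace A = 1"
    using assms unfolding density_def by auto
  define a d b where "a = Re (A$1$1)" and "d = Re (A$2$2)" and "b = A$1$2"
  have entries: "A$1$1 = of_real a" "A$2$2 = of_real d" "A$1$2 = b" "A$2$1 = cnj b"
    using arg_cong[OF herm, of "\<lambda>B. B$1$1"] arg_cong[OF herm, of "\<lambda>B. B$2$2"]
      arg_cong[OF herm, of "\<lambda>B. B$2$1"]
    by (simp_all add: adjoint2_def complex_eq_iff a_def d_def b_def)
  have ad: "a + d = 1"
    using arg_cong[OF tr, of Re] by (simp add: trace_def sum_2 entries)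
  have form: "0 \<le> Re (cnj u * a * u + cnj u * b * v + cnj v * cnj b * u + cnj v * d * v)" for u v
    using psd[of "\<chi> k. if k = 1 then u else v"] by (simp add: sum_2 entries)
  have "0 \<le> d * (a * d - ((Re b)\<^sup>2 + (Im b)\<^sup>2))"
    using form[of "of_real d" "- cnj b"] by (simp add: algebra_simps power2_eq_square)
  moreover have "0 \<le> a * (a * d - ((Re b)\<^sup>2 + (Im b)\<^sup>2))"
    using form[of "- b" "of_real a"] by (simp add: algebra_simps power2_eq_square)
  ultimately have "0 \<le> (a + d) * (a * d - ((Re b)\<^sup>2 + (Im b)\<^sup>2))"
    by (simp add: distrib_right)
  then have "(Re b)\<^sup>2 + (Im b)\<^sup>2 \<le> a * d"
    using ad by simp
  moreover have "coherence A + (bloch_z A)\<^sup>2 = (a + d)\<^sup>2 - 4 * (a * d - ((Re b)\<^sup>2 + (Im b)\<^sup>2))"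
    by (simp add: coherence_def bloch_entries entries power2_eq_square algebra_simps)
  ultimately show ?thesis
    using ad by simp
qed

lemma coherence_lindblad_has_derivative:
  assumes "(\<rho> has_vector_derivative lindblad w ex ey g (\<rho> t)) (at t within S)"
  shows "((\<lambda>t. coherence (\<rho> t)) has_real_derivative
      2 * bloch_z (\<rho> t) * (ey * bloch_x (\<rho> t) - ex * bloch_y (\<rho> t)) - 4 * g * coherence (\<rho> t))
      (at t within S)"
    and "((\<lambda>t. (bloch_z (\<rho> t))\<^sup>2) has_real_derivative
      - 2 * bloch_z (\<rho> t) * (ey * bloch_x (\<rho> t) - ex * bloch_y (\<rho> t))) (at t within S)"
proof -
  note bloch = bloch_has_real_derivative[OF assms, unfolded bloch_lindblad]
  show "((\<lambda>t. coherence (\<rho> t)) has_real_derivative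
      2 * bloch_z (\<rho> t) * (ey * bloch_x (\<rho> t) - ex * bloch_y (\<rho> t)) - 4 * g * coherence (\<rho> t))
      (at t within S)"
    unfolding coherence_def
    by (rule DERIV_cong[OF DERIV_add[OF DERIV_power[OF bloch(1)] DERIV_power[OF bloch(2)]]])
      (simp add: power2_eq_square algebra_simps)
  show "((\<lambda>t. (bloch_z (\<rho> t))\<^sup>2) has_real_derivative
      - 2 * bloch_z (\<rho> t) * (ey * bloch_x (\<rho> t) - ex * bloch_y (\<rho> t))) (at t within S)"
    by (rule DERIV_cong[OF DERIV_power[OF bloch(3)]]) (simp add: algebra_simps)
qed

lemma DERIV_within_nonneg_imp_nondecreasing:
  fixes f f' :: "real \<Rightarrow> real"
  assumes "a \<le> b"
    and "\<And>x. x \<in> {a..b} \<Longrightarrow> (f has_real_derivative f' x) (at x within {a..b})"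
    and "\<And>x. x \<in> {a..b} \<Longrightarrow> 0 \<le> f' x"
  shows "f a \<le> f b"
proof -
  have "\<exists>x\<in>{a..b}. f b - f a = (\<lambda>h. h * f' x) (b - a)"
    using assms(1,2) by (intro mvt_very_simple) (simp_all add: has_field_derivative_def mult_commute_abs)
  then obtain x where "x \<in> {a..b}" "f b - f a = (b - a) * f' x"
    by auto
  moreover have "0 \<le> (b - a) * f' x"
    using assms(1,3) \<open>x \<in> {a..b}\<close> by simp
  ultimately show ?thesis
    by linarith
qed

lemma lindblad_bloch_ball_invariant:
  assumes deriv: "\<And>t. t \<ge> 0 \<Longrightarrow>
      (\<rho> has_vector_derivative lindblad (w t) (ex t) (ey t) (g t) (\<rho> t)) (at t within {0..})"
    and damping: "\<And>t. t \<ge> 0 \<Longrightarrow> 0 \<le> g t"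
    and "density (\<rho> 0)" and "0 \<le> t"
  shows "coherence (\<rho> t) + (bloch_z (\<rho> t))\<^sup>2 \<le> 1"
proof -
  have "(\<lambda>s. - (coherence (\<rho> s) + (bloch_z (\<rho> s))\<^sup>2)) 0 \<le> (\<lambda>s. - (coherence (\<rho> s) + (bloch_z (\<rho> s))\<^sup>2)) t"
  proof (rule DERIV_within_nonneg_imp_nondecreasing[OF \<open>0 \<le> t\<close>])
    fix s assume s: "s \<in> {0..t}"
    have "((\<lambda>s. - (coherence (\<rho> s) + (bloch_z (\<rho> s))\<^sup>2)) has_real_derivative 4 * g s * coherence (\<rho> s))
        (at s within {0..})"
      using s by (intro DERIV_cong[OF DERIV_minus[OF DERIV_add[OF
          coherence_lindblad_has_derivative[OF deriv]]]]) (auto simp: algebra_simps)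
    then show "((\<lambda>s. - (coherence (\<rho> s) + (bloch_z (\<rho> s))\<^sup>2)) has_real_derivative 4 * g s * coherence (\<rho> s))
        (at s within {0..t})"
      by (rule has_field_derivative_subset) auto
    show "0 \<le> 4 * g s * coherence (\<rho> s)"
      using damping s by (simp add: coherence_def)
  qed
  then show ?thesis
    using bloch_ball[OF assms(3)] by simp
qed

lemma coherence_rate_lower_bound:
  fixes z w c e g G :: real
  assumes "z\<^sup>2 + c \<le> 1" "w\<^sup>2 \<le> e\<^sup>2 * c" "0 \<le> c" "0 \<le> g" "g \<le> G" "0 \<le> e"
  shows "- (2 * G + sqrt (e\<^sup>2 + 4 * G\<^sup>2)) \<le> 2 * z * w - 4 * g * c"
proof -
  define p q s where "p = \<bar>z\<bar>" and "q = sqrt c" and "s = sqrt (e\<^sup>2 + 4 * G\<^sup>2)"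
  have "0 \<le> G" "0 \<le> p" "0 \<le> q" "0 \<le> s" "q\<^sup>2 = c" "s\<^sup>2 = e\<^sup>2 + 4 * G\<^sup>2"
    using assms by (simp_all add: p_def q_def s_def)
  have pq: "p\<^sup>2 + q\<^sup>2 \<le> 1"
    using assms(1) \<open>q\<^sup>2 = c\<close> by (simp add: p_def)
  have "w\<^sup>2 \<le> (e * q)\<^sup>2"
    using assms(2) \<open>q\<^sup>2 = c\<close> by (simp add: power_mult_distrib)
  then have "\<bar>w\<bar> \<le> e * q"
    using assms(6) \<open>0 \<le> q\<close> by (simp add: abs_le_square_iff[symmetric])
  then have "2 * p * \<bar>w\<bar> \<le> 2 * e * p * q"
    using \<open>0 \<le> p\<close> mult_left_mono[of "\<bar>w\<bar>" "e * q" "2 * p"] by (simp add: algebra_simps)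
  moreover have "- (2 * z * w) \<le> 2 * p * \<bar>w\<bar>"
    using abs_ge_minus_self[of "2 * z * w"] by (simp add: p_def abs_mult)
  ultimately have "- (2 * z * w) \<le> 2 * e * p * q"
    by linarith
  moreover have "4 * g * c \<le> 4 * G * q\<^sup>2"
    using assms(3,5) \<open>q\<^sup>2 = c\<close> by (simp add: mult_right_mono)
  \<comment> \<open>\<open>s\<close> is the largest eigenvalue of the quadratic form \<open>2 e p q + 2 G (q\<^sup>2 - p\<^sup>2)\<close>\<close>
  moreover have "2 * e * p * q + 2 * G * (q\<^sup>2 - p\<^sup>2) \<le> s * (p\<^sup>2 + q\<^sup>2)"
  proof (cases "s + 2 * G = 0")
    case True
    then have "G = 0" "s = 0"
      using \<open>0 \<le> G\<close> \<open>0 \<le> s\<close> by auto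
    then have "e = 0"
      using \<open>s\<^sup>2 = e\<^sup>2 + 4 * G\<^sup>2\<close> by simp
    with \<open>G = 0\<close> \<open>s = 0\<close> show ?thesis
      by simp
  next
    case False
    have "(s + 2 * G) * (s * (p\<^sup>2 + q\<^sup>2) - 2 * e * p * q - 2 * G * (q\<^sup>2 - p\<^sup>2))
        = ((s + 2 * G) * p - e * q)\<^sup>2 + (s\<^sup>2 - 4 * G\<^sup>2 - e\<^sup>2) * q\<^sup>2"
      by (simp add: power2_eq_square algebra_simps)
    then have "0 \<le> (s + 2 * G) * (s * (p\<^sup>2 + q\<^sup>2) - 2 * e * p * q - 2 * G * (q\<^sup>2 - p\<^sup>2))"
      using \<open>s\<^sup>2 = e\<^sup>2 + 4 * G\<^sup>2\<close> by simp
    moreover have "0 < s + 2 * G"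
      using False \<open>0 \<le> G\<close> \<open>0 \<le> s\<close> by linarith
    ultimately show ?thesis
      by (simp add: zero_le_mult_iff)
  qed
  moreover have "(s + 2 * G) * (p\<^sup>2 + q\<^sup>2) \<le> s + 2 * G"
    using pq \<open>0 \<le> G\<close> \<open>0 \<le> s\<close> mult_left_mono[of "p\<^sup>2 + q\<^sup>2" 1 "s + 2 * G"] by simp
  ultimately show ?thesis
    unfolding s_def[symmetric] by (simp add: algebra_simps)
qed

lemma lindblad_coherence_linear_decay:
  assumes deriv: "\<And>t. t \<ge> 0 \<Longrightarrow>
      (\<rho> has_vector_derivative lindblad (w t) (ex t) (ey t) (g t) (\<rho> t)) (at t within {0..})"
    and damping: "\<And>t. t \<ge> 0 \<Longrightarrow> 0 \<le> g t \<and> g t \<le> G"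
    and drive: "\<And>t. t \<ge> 0 \<Longrightarrow> (ex t)\<^sup>2 + (ey t)\<^sup>2 \<le> e\<^sup>2"
    and "density (\<rho> 0)" and "0 \<le> t"
  shows "coherence (\<rho> 0) - (2 * G + sqrt (e\<^sup>2 + 4 * G\<^sup>2)) * t \<le> coherence (\<rho> t)"
proof -
  define M where "M = 2 * G + sqrt (e\<^sup>2 + 4 * G\<^sup>2)"
  have "(\<lambda>s. coherence (\<rho> s) + M * s) 0 \<le> (\<lambda>s. coherence (\<rho> s) + M * s) t"
  proof (rule DERIV_within_nonneg_imp_nondecreasing[OF \<open>0 \<le> t\<close>])
    fix s assume s: "s \<in> {0..t}"
    define W where "W = ey s * bloch_x (\<rho> s) - ex s * bloch_y (\<rho> s)"
    have "((\<lambda>s. coherence (\<rho> s) + M * s) has_real_derivative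
        2 * bloch_z (\<rho> s) * W - 4 * g s * coherence (\<rho> s) + M) (at s within {0..})"
      unfolding W_def using s
      by (intro DERIV_cong[OF DERIV_add[OF coherence_lindblad_has_derivative(1)[OF deriv]
          DERIV_cmult[OF DERIV_ident]]]) auto
    then show "((\<lambda>s. coherence (\<rho> s) + M * s) has_real_derivative
        2 * bloch_z (\<rho> s) * W - 4 * g s * coherence (\<rho> s) + M) (at s within {0..t})"
      by (rule has_field_derivative_subset) auto
    \<comment> \<open>Lagrange's identity\<close>
    have "W\<^sup>2 + (ex s * bloch_x (\<rho> s) + ey s * bloch_y (\<rho> s))\<^sup>2 = ((ex s)\<^sup>2 + (ey s)\<^sup>2) * coherence (\<rho> s)"
      by (simp add: W_def coherence_def power2_eq_square algebra_simps)
    also have "\<dots> \<le> e\<^sup>2 * coherence (\<rho> s)"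
      using drive s by (intro mult_right_mono) (auto simp: coherence_def)
    finally have "W\<^sup>2 \<le> e\<^sup>2 * coherence (\<rho> s)"
      using zero_le_power2[of "ex s * bloch_x (\<rho> s) + ey s * bloch_y (\<rho> s)"] by linarith
    then show "0 \<le> 2 * bloch_z (\<rho> s) * W - 4 * g s * coherence (\<rho> s) + M"
      using coherence_rate_lower_bound[of "bloch_z (\<rho> s)" "coherence (\<rho> s)" W "\<bar>e\<bar>" "g s" G]
        lindblad_bloch_ball_invariant[OF deriv _ \<open>density (\<rho> 0)\<close>] damping s
      by (auto simp: M_def coherence_def add.commute)
  qed
  then show ?thesis
    by (simp add: M_def algebra_simps)
qed

lemma decay_rate_le_if_damping_dominates:
  fixes e G :: real
  assumes "e\<^sup>2 \<le> 4 * G\<^sup>2" "0 \<le> G"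
  shows "2 * G + sqrt (e\<^sup>2 + 4 * G\<^sup>2) \<le> 4 * sqrt 2 * G"
proof -
  have "sqrt (e\<^sup>2 + 4 * G\<^sup>2) \<le> sqrt ((2 * G)\<^sup>2 * 2)"
    using assms(1) by (simp add: power_mult_distrib)
  also have "\<dots> = 2 * sqrt 2 * G"
    using assms(2) by (simp only: real_sqrt_mult real_sqrt_abs) simp
  finally show ?thesis
    using assms(2) mult_right_mono[of 1 "sqrt 2" "2 * G"] by simp
qed

lemma decay_rate_bound_if_drive_dominates:
  fixes e G :: real
  assumes "4 * G\<^sup>2 < e\<^sup>2" "0 \<le> G" "0 < e"
  shows "(2 * G + sqrt (e\<^sup>2 + 4 * G\<^sup>2)) * sqrt (e\<^sup>2 - 2 * G\<^sup>2) \<le> 2 * e\<^sup>2"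
proof -
  define r where "r = sqrt (e\<^sup>2 - 2 * G\<^sup>2)"
  have "2 * G\<^sup>2 \<le> e\<^sup>2"
    using assms(1) zero_le_power2[of G] by linarith
  then have "0 \<le> r" "r\<^sup>2 = e\<^sup>2 - 2 * G\<^sup>2"
    by (simp_all add: r_def)
  have "(2 * G)\<^sup>2 < e\<^sup>2"
    using assms(1) by (simp add: power_mult_distrib)
  then have "2 * G \<le> e"
    using assms(3) power2_less_imp_less by fastforce
  moreover have "sqrt (e\<^sup>2 + 4 * G\<^sup>2) \<le> e + 2 * G\<^sup>2 / e"
    using assms by (intro real_le_lsqrt) (auto simp: power2_eq_square field_simps)
  ultimately have "(2 * G + sqrt (e\<^sup>2 + 4 * G\<^sup>2)) * r \<le> (2 * e + 2 * G\<^sup>2 / e) * r"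
    using \<open>0 \<le> r\<close> by (intro mult_right_mono) auto
  also have "\<dots> = 2 * ((e\<^sup>2 + G\<^sup>2) * r) / e"
    using assms(3) by (simp add: field_simps power2_eq_square)
  also have "(e\<^sup>2 + G\<^sup>2) * r \<le> e ^ 3"
  proof (rule power2_le_imp_le)
    have "((e\<^sup>2 + G\<^sup>2) * r)\<^sup>2 = (e\<^sup>2 + G\<^sup>2)\<^sup>2 * (e\<^sup>2 - 2 * G\<^sup>2)"
      by (simp add: power_mult_distrib \<open>r\<^sup>2 = e\<^sup>2 - 2 * G\<^sup>2\<close>)
    also have "\<dots> = (e ^ 3)\<^sup>2 - 3 * e\<^sup>2 * G ^ 4 - 2 * G ^ 6"
      by (simp add: eval_nat_numeral algebra_simps)
    also have "\<dots> \<le> (e ^ 3)\<^sup>2"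
    proof -
      have "0 \<le> e\<^sup>2 * G ^ 4" "0 \<le> G ^ 6"
        by (simp_all add: zero_le_even_power)
      then show ?thesis
        by linarith
    qed
    finally show "((e\<^sup>2 + G\<^sup>2) * r)\<^sup>2 \<le> (e ^ 3)\<^sup>2" .
  qed (use assms(3) in simp)
  then have "2 * ((e\<^sup>2 + G\<^sup>2) * r) / e \<le> 2 * e ^ 3 / e"
    using assms(3) by (simp add: divide_right_mono)
  finally show ?thesis
    using assms(3) by (simp add: r_def power2_eq_square power3_eq_cube)
qed

lemma decay_rate_mult_T_p_le:
  assumes "Cbar \<le> 1" "0 < eps" "0 \<le> \<gamma>0 + \<gamma>"
  shows "(2 * (\<gamma>0 + \<gamma>) + sqrt (eps\<^sup>2 + 4 * (\<gamma>0 + \<gamma>)\<^sup>2)) * T_p Cbar eps \<gamma>0 \<gamma> \<le> 1 - Cbar"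
proof (cases "4 * (\<gamma>0 + \<gamma>)\<^sup>2 \<ge> eps\<^sup>2")
  case True
  then have "0 < \<gamma>0 + \<gamma>"
    using assms(2,3) by (cases "\<gamma>0 + \<gamma> = 0") auto
  then show ?thesis
    using True decay_rate_le_if_damping_dominates[OF True assms(3)] assms(1)
      mult_right_mono[of _ "4 * sqrt 2 * (\<gamma>0 + \<gamma>)" "(1 - Cbar) / (4 * sqrt 2 * (\<gamma>0 + \<gamma>))"]
    by (simp add: T_p_def)
next
  case False
  let ?M = "2 * (\<gamma>0 + \<gamma>) + sqrt (eps\<^sup>2 + 4 * (\<gamma>0 + \<gamma>)\<^sup>2)"
  let ?r = "sqrt (eps\<^sup>2 - 2 * (\<gamma>0 + \<gamma>)\<^sup>2)"
  have "?M * T_p Cbar eps \<gamma>0 \<gamma> = (1 - Cbar) * (?M * ?r) / (2 * eps\<^sup>2)"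
    using False by (simp add: T_p_def)
  also have "\<dots> \<le> (1 - Cbar) * (2 * eps\<^sup>2) / (2 * eps\<^sup>2)"
    using decay_rate_bound_if_drive_dominates[of "\<gamma>0 + \<gamma>" eps] False assms
    by (intro divide_right_mono mult_left_mono) auto
  finally show ?thesis
    using assms(2) by simp
qed

theorem theorem4:
  fixes Cbar eps \<omega> \<gamma>0 \<gamma> :: real
    and om ex ey dg :: "real \<Rightarrow> real"
    and \<rho> :: "real \<Rightarrow> complex^2^2"
  assumes "0 < Cbar" "Cbar \<le> 1" "eps > 0" "\<omega> \<ge> 0" "\<gamma>0 \<ge> \<gamma>" "\<gamma> \<ge> 0"
    and "\<And>t. t \<ge> 0 \<Longrightarrow> \<bar>om t\<bar> \<le> \<omega>"
    and "\<And>t. t \<ge> 0 \<Longrightarrow> sqrt ((ex t)\<^sup>2 + (ey t)\<^sup>2) \<le> eps"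
    and "\<And>t. t \<ge> 0 \<Longrightarrow> \<bar>dg t\<bar> \<le> \<gamma>"
    and "\<And>t. t \<ge> 0 \<Longrightarrow>
           (\<rho> has_vector_derivative
              (cscale (- \<i>) (commutator (Ham (om t) (ex t) (ey t)) (\<rho> t))
               + (\<gamma>0 + dg t) *\<^sub>R (sigma_z ** \<rho> t ** sigma_z - \<rho> t)))
           (at t within {0..})"
    and "density (\<rho> 0)"
    and "coherence (\<rho> 0) = 1"
  shows "\<forall>t \<in> {0 .. T_p Cbar eps \<gamma>0 \<gamma>}. \<rho> t \<in> D_p Cbar"
proof -
  define G where "G = \<gamma>0 + \<gamma>"
  define M where "M = 2 * G + sqrt (eps\<^sup>2 + 4 * G\<^sup>2)"
  have deriv: "\<And>t. t \<ge> 0 \<Longrightarrow> (\<rho> has_vector_derivative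
      lindblad (om t) (ex t) (ey t) (\<gamma>0 + dg t) (\<rho> t)) (at t within {0..})"
    using assms(10) by (simp add: lindblad_def)
  have damping: "\<And>t. t \<ge> 0 \<Longrightarrow> 0 \<le> \<gamma>0 + dg t \<and> \<gamma>0 + dg t \<le> G"
    using assms(5,9) by (force simp: G_def abs_le_iff)
  have drive: "\<And>t. t \<ge> 0 \<Longrightarrow> (ex t)\<^sup>2 + (ey t)\<^sup>2 \<le> eps\<^sup>2"
    using assms(8) by (simp add: sqrt_le_D)
  have decay: "1 - M * t \<le> coherence (\<rho> t)" if "0 \<le> t" for t
    using lindblad_coherence_linear_decay[OF deriv damping drive assms(11) that] assms(12)
    by (simp add: M_def)
  have rate: "M * T_p Cbar eps \<gamma>0 \<gamma> \<le> 1 - Cbar"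
    using decay_rate_mult_T_p_le[OF assms(2,3)] assms(5,6) by (simp add: M_def G_def)
  have "0 \<le> M"
    using assms(5,6) by (simp add: M_def G_def)
  show ?thesis
  proof
    fix t assume t: "t \<in> {0 .. T_p Cbar eps \<gamma>0 \<gamma>}"
    then have "M * t \<le> 1 - Cbar"
      using rate \<open>0 \<le> M\<close> by (meson atLeastAtMost_iff mult_left_mono order_trans)
    then show "\<rho> t \<in> D_p Cbar"
      using decay[of t] t by (simp add: D_p_def)
  qed
qed
end
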